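(* Let $\mathbb{X}$ be a finite set, $\mathcal{H}_A$ a finite-dimensional Hilbert space, $\{\rho_A^x\}_{x\in\mathbb{X}}$ density operators on $\mathcal{H}_A$, and $\sim$ a neighbouring relationship on density operators such that $\rho_A^x\sim\rho_A^{x'}$ for all $x,x'\in\mathbb{X}$. Let $\mathcal{E}$ be a quantum channel that is $(\epsilon,0)$-differentially private with respect to $\sim$, for some $\epsilon\geq0$. Then, writing $\mathcal{E}(\rho_A)$ for the family $\{\mathcal{E}(\rho_A^x)\}_{x\in\mathbb{X}}$, \[ \mathcal{B}(X\rightarrow A)_{\mathcal{E}(\rho_A)}\leq\mathcal{R}(X\rightarrow A)_{\mathcal{E}(\rho_A)}\leq\epsilon/\ln(2). \]
   Context: All logarithms $\log$ are base 2; $\ln$ is the natural logarithm. A neighbouring relationship is a reflexive and symmetric relation $\sim$ on density operators. For $\epsilon,\delta\geq0$, a quantum channel $\mathcal{E}$ is $(\epsilon,\delta)$-differentially private (w.r.t. $\sim$) if $\operatorname{tr}(M\mathcal{E}(\rho))\leq e^{\epsilon}\operatorname{tr}(M\mathcal{E}(\sigma))+\delta$ for all operators $0\preceq M\preceq I$ and all $\rho\sim\sigma$. For a density operator $\rho$ and positive semi-definite $\sigma$, $\widetilde{D}_\infty(\rho\|\sigma)=\log\inf\{\mu\in\mathbb{R}:\rho\leq\mu\sigma\}$ ($+\infty$ if $\operatorname{supp}\rho\not\subseteq\operatorname{supp}\sigma$). For a family $\{\tau^x\}_{x\in\mathbb{X}}$ of density operators, $\mathcal{B}=\min_{\pi\in\Delta(\mathbb{X})}\max_x\widetilde{D}_\infty(\tau^x\|\sum_{x'}\pi(x')\tau^{x'})$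 (with $\Delta(\mathbb{X})$ the probability mass functions on $\mathbb{X}$) and $\mathcal{R}=\max_{x,x'}\widetilde{D}_\infty(\tau^x\|\tau^{x'})$. *)

theory Defs
  imports Complex_Main "Jordan_Normal_Form.Matrix" "HOL-Library.Extended_Real"
begin

text \<open>Operators on a d-dimensional Hilbert space are d x d complex matrices.\<close>

definition qtrace :: "complex mat \<Rightarrow> complex" where
  "qtrace A = (\<Sum>i<dim_row A. A $$ (i, i))"

definition qadj :: "complex mat \<Rightarrow> complex mat" where
  "qadj A = mat (dim_col A) (dim_row A) (\<lambda>(i, j). cnj (A $$ (j, i)))"

definition qform :: "complex mat \<Rightarrow> complex vec \<Rightarrow> complex" where
  "qform A v = (\<Sum>i<dim_row A. \<Sum>j<dim_col A. cnj (v $ i) * A $$ (i, j) * v $ j)"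

definition psd :: "nat \<Rightarrow> complex mat \<Rightarrow> bool" where
  "psd d A \<longleftrightarrow> A \<in> carrier_mat d d \<and> qadj A = A \<and>
     (\<forall>v \<in> carrier_vec d. 0 \<le> Re (qform A v))"

definition loewner_le :: "nat \<Rightarrow> complex mat \<Rightarrow> complex mat \<Rightarrow> bool" where
  "loewner_le d A B \<longleftrightarrow> A \<in> carrier_mat d d \<and> B \<in> carrier_mat d d \<and> psd d (B - A)"

definition density :: "nat \<Rightarrow> complex mat \<Rightarrow> bool" where
  "density d \<rho> \<longleftrightarrow> psd d \<rho> \<and> qtrace \<rho> = 1"

text \<open>(id_k \<otimes> E)(X) for X a (k*n) x (k*n) matrix, the ancilla being the first factor.\<close>
definition id_tensor :: "nat \<Rightarrow> nat \<Rightarrow> nat \<Rightarrow> (complex mat \<Rightarrow> complex mat) \<Rightarrow> complex mat \<Rightarrow> complex mat" where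
  "id_tensor k n m E X = mat (k * m) (k * m) (\<lambda>(i, j).
      E (mat n n (\<lambda>(p, q). X $$ ((i div m) * n + p, (j div m) * n + q))) $$ (i mod m, j mod m))"

definition quantum_channel :: "nat \<Rightarrow> nat \<Rightarrow> (complex mat \<Rightarrow> complex mat) \<Rightarrow> bool" where
  "quantum_channel n m E \<longleftrightarrow>
     (\<forall>A \<in> carrier_mat n n. E A \<in> carrier_mat m m) \<and>
     (\<forall>A \<in> carrier_mat n n. \<forall>B \<in> carrier_mat n n. E (A + B) = E A + E B) \<and>
     (\<forall>c. \<forall>A \<in> carrier_mat n n. E (c \<cdot>\<^sub>m A) = c \<cdot>\<^sub>m E A) \<and>
     (\<forall>k. \<forall>X. psd (k * n) X \<longrightarrow> psd (k * m) (id_tensor k n m E X)) \<and>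
     (\<forall>A \<in> carrier_mat n n. qtrace (E A) = qtrace A)"

definition neighbouring :: "nat \<Rightarrow> (complex mat \<Rightarrow> complex mat \<Rightarrow> bool) \<Rightarrow> bool" where
  "neighbouring n rel \<longleftrightarrow>
     (\<forall>\<rho>. density n \<rho> \<longrightarrow> rel \<rho> \<rho>) \<and>
     (\<forall>\<rho> \<sigma>. density n \<rho> \<longrightarrow> density n \<sigma> \<longrightarrow> rel \<rho> \<sigma> \<longrightarrow> rel \<sigma> \<rho>)"

definition diff_private ::
  "nat \<Rightarrow> nat \<Rightarrow> (complex mat \<Rightarrow> complex mat \<Rightarrow> bool) \<Rightarrow> (complex mat \<Rightarrow> complex mat) \<Rightarrow> real \<Rightarrow> real \<Rightarrow> bool" where
  "diff_private n m rel E \<epsilon> \<delta> \<longleftrightarrow>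
     (\<forall>M \<rho> \<sigma>. loewner_le m (0\<^sub>m m m) M \<longrightarrow> loewner_le m M (1\<^sub>m m) \<longrightarrow>
        density n \<rho> \<longrightarrow> density n \<sigma> \<longrightarrow> rel \<rho> \<sigma> \<longrightarrow>
        Re (qtrace (M * E \<rho>)) \<le> exp \<epsilon> * Re (qtrace (M * E \<sigma>)) + \<delta>)"

definition Dmax :: "nat \<Rightarrow> complex mat \<Rightarrow> complex mat \<Rightarrow> ereal" where
  "Dmax d \<rho> \<sigma> = (if \<exists>\<mu>::real. loewner_le d \<rho> (complex_of_real \<mu> \<cdot>\<^sub>m \<sigma>)
     then ereal (log 2 (Inf {\<mu>::real. loewner_le d \<rho> (complex_of_real \<mu> \<cdot>\<^sub>m \<sigma>)}))
     else \<infinity>)"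

definition pmfs_on :: "'x set \<Rightarrow> ('x \<Rightarrow> real) set" where
  "pmfs_on X = {\<pi>. (\<forall>x\<in>X. 0 \<le> \<pi> x) \<and> (\<Sum>x\<in>X. \<pi> x) = 1}"

definition mixture :: "nat \<Rightarrow> 'x set \<Rightarrow> ('x \<Rightarrow> real) \<Rightarrow> ('x \<Rightarrow> complex mat) \<Rightarrow> complex mat" where
  "mixture d X \<pi> \<tau> = mat d d (\<lambda>ij. \<Sum>x\<in>X. complex_of_real (\<pi> x) * \<tau> x $$ ij)"

definition B_quant :: "nat \<Rightarrow> 'x set \<Rightarrow> ('x \<Rightarrow> complex mat) \<Rightarrow> ereal" where
  "B_quant d X \<tau> = (INF \<pi> \<in> pmfs_on X. SUP x \<in> X. Dmax d (\<tau> x) (mixture d X \<pi> \<tau>))"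

definition R_quant :: "nat \<Rightarrow> 'x set \<Rightarrow> ('x \<Rightarrow> complex mat) \<Rightarrow> ereal" where
  "R_quant d X \<tau> = (SUP x \<in> X. SUP x' \<in> X. Dmax d (\<tau> x) (\<tau> x'))"

end

theory Submission
  imports Defs "HOL-Analysis.Convex"
begin

text \<open>Differential privacy with \<open>\<delta> = 0\<close> tested on the rank-one effects \<open>M = t |v\<rangle>\<langle>v|\<close>
  (scaled so that \<open>0 \<le> M \<le> I\<close>) gives \<open>\<langle>v|\<E>(\<rho>)|v\<rangle> \<le> e\<^sup>\<epsilon> \<langle>v|\<E>(\<sigma>)|v\<rangle>\<close> for every \<open>v\<close>, i.e. the
  operator inequality \<open>\<E>(\<rho>) \<le> e\<^sup>\<epsilon> \<E>(\<sigma>)\<close>. Hence every \<open>D\<^sub>\<infinity>(\<E>(\<rho>\<^sup>x)\<parallel>\<E>(\<rho>\<^sup>x\<^sup>'))\<close> is at most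
  \<open>log e\<^sup>\<epsilon> = \<epsilon>/ln 2\<close>, which bounds \<open>\<R>\<close>. For \<open>\<B> \<le> \<R>\<close>, take \<open>\<pi>\<close> a point mass at some \<open>x'\<close>:
  the mixture is then \<open>\<E>(\<rho>\<^sup>x\<^sup>')\<close> itself.\<close>

lemma quantum_channel_psd:
  assumes "quantum_channel n m E" and "psd n A"
  shows "psd m (E A)"
proof -
  have A: "A \<in> carrier_mat n n" using assms(2) by (simp add: psd_def)
  have "E A \<in> carrier_mat m m" using assms(1) A by (simp add: quantum_channel_def)
  moreover have "mat n n (\<lambda>(p, q). A $$ (p, q)) = A" using A by (intro eq_matI) auto
  ultimately have "id_tensor 1 n m E A = E A" unfolding id_tensor_def by (intro eq_matI) auto
  moreover have "\<forall>k X. psd (k * n) X \<longrightarrow> psd (k * m) (id_tensor k n m E X)"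
    using assms(1) by (simp add: quantum_channel_def)
  then have "psd (1 * m) (id_tensor 1 n m E A)" using assms(2) by (metis mult_1)
  ultimately show ?thesis by simp
qed

lemma quantum_channel_density:
  assumes "quantum_channel n m E" and "density n \<rho>"
  shows "density m (E \<rho>)"
proof -
  have "\<rho> \<in> carrier_mat n n" using assms(2) by (simp add: density_def psd_def)
  then have "qtrace (E \<rho>) = qtrace \<rho>" using assms(1) by (simp add: quantum_channel_def)
  then show ?thesis using assms quantum_channel_psd by (simp add: density_def)
qed

lemma qtrace_minus:
  assumes "A \<in> carrier_mat d d" "B \<in> carrier_mat d d"
  shows "qtrace (A - B) = qtrace A - qtrace B"
  using assms by (simp add: qtrace_def sum_subtractf)

lemma qtrace_smult:
  assumes "A \<in> carrier_mat d d"
  shows "qtrace (c \<cdot>\<^sub>m A) = c * qtrace A"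
  using assms by (simp add: qtrace_def sum_distrib_left)

lemma qform_minus:
  assumes "A \<in> carrier_mat d d" "B \<in> carrier_mat d d"
  shows "qform (A - B) v = qform A v - qform B v"
  using assms by (simp add: qform_def sum_subtractf algebra_simps)

lemma qform_smult: "qform (c \<cdot>\<^sub>m A) v = c * qform A v"
  by (simp add: qform_def sum_distrib_left algebra_simps)

lemma qadj_minus:
  assumes "A \<in> carrier_mat d d" "B \<in> carrier_mat d d"
  shows "qadj (A - B) = qadj A - qadj B"
  using assms by (intro eq_matI) (auto simp: qadj_def)

lemma qadj_smult_of_real: "qadj (complex_of_real c \<cdot>\<^sub>m A) = complex_of_real c \<cdot>\<^sub>m qadj A"
  by (intro eq_matI) (auto simp: qadj_def)

lemma qform_unit_vec:
  assumes "A \<in> carrier_mat d d" "i < d"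
  shows "qform A (unit_vec d i) = A $$ (i, i)"
proof -
  have "qform A (unit_vec d i) = (\<Sum>k<d. \<Sum>l<d. if k = i \<and> l = i then A $$ (k, l) else 0)"
    using assms unfolding qform_def by (intro sum.cong refl) (auto simp: unit_vec_def)
  also have "\<dots> = (\<Sum>k<d. if k = i then A $$ (k, i) else 0)"
    using assms(2) by (intro sum.cong refl) auto
  also have "\<dots> = A $$ (i, i)" using assms(2) by simp
  finally show ?thesis .
qed

lemma psd_qtrace_nonneg:
  assumes "psd d A"
  shows "0 \<le> Re (qtrace A)"
proof -
  have "A \<in> carrier_mat d d" using assms by (simp add: psd_def)
  then have "Re (qtrace A) = (\<Sum>i<d. Re (qform A (unit_vec d i)))"
    by (simp add: qtrace_def qform_unit_vec)
  also have "\<dots> \<ge> 0" using assms by (intro sum_nonneg) (auto simp: psd_def)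
  finally show ?thesis .
qed

lemma cnj_mult_self: "cnj z * z = complex_of_real ((cmod z)\<^sup>2)"
  by (metis complex_norm_square mult.commute)

lemma Re_qform_one: "Re (qform (1\<^sub>m d) w) = (\<Sum>i<d. (cmod (w $ i))\<^sup>2)"
proof -
  have "qform (1\<^sub>m d) w = (\<Sum>i<d. \<Sum>j<d. if j = i then cnj (w $ i) * w $ j else 0)"
    unfolding qform_def by (intro sum.cong refl) auto
  also have "\<dots> = (\<Sum>i<d. cnj (w $ i) * w $ i)" by simp
  finally show ?thesis by (simp only: Re_sum cnj_mult_self Re_complex_of_real)
qed

lemma cmod_sum_cnj_mult_squared_le:
  "(cmod (\<Sum>j<d. cnj (v $ j) * w $ j))\<^sup>2 \<le> (\<Sum>j<d. (cmod (v $ j))\<^sup>2) * (\<Sum>j<d. (cmod (w $ j))\<^sup>2)"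
proof -
  have "cmod (\<Sum>j<d. cnj (v $ j) * w $ j) \<le> (\<Sum>j<d. cmod (v $ j) * cmod (w $ j))"
    by (rule order_trans[OF norm_sum]) (simp add: norm_mult)
  then have "(cmod (\<Sum>j<d. cnj (v $ j) * w $ j))\<^sup>2 \<le> (\<Sum>j<d. cmod (v $ j) * cmod (w $ j))\<^sup>2"
    by (simp add: power_mono)
  also have "\<dots> \<le> (\<Sum>j<d. (cmod (v $ j))\<^sup>2) * (\<Sum>j<d. (cmod (w $ j))\<^sup>2)"
    by (rule Cauchy_Schwarz_ineq_sum)
  finally show ?thesis .
qed

definition rank_one :: "nat \<Rightarrow> real \<Rightarrow> complex vec \<Rightarrow> complex mat" where
  "rank_one d t v = mat d d (\<lambda>(i, j). complex_of_real t * v $ i * cnj (v $ j))"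

lemma rank_one_carrier [simp]: "rank_one d t v \<in> carrier_mat d d"
  by (simp add: rank_one_def)

lemma qtrace_rank_one_mult:
  assumes "B \<in> carrier_mat d d"
  shows "qtrace (rank_one d t v * B) = complex_of_real t * qform B v"
proof -
  have "qtrace (rank_one d t v * B) =
      (\<Sum>i<d. \<Sum>k<d. complex_of_real t * (cnj (v $ k) * B $$ (k, i) * v $ i))"
    using assms unfolding qtrace_def
    by (intro sum.cong refl) (auto simp: rank_one_def scalar_prod_def lessThan_atLeast0 algebra_simps)
  also have "\<dots> = complex_of_real t * qform B v"
    using assms by (subst sum.swap) (simp add: qform_def sum_distrib_left)
  finally show ?thesis .
qed

lemma Re_qform_rank_one:
  "Re (qform (rank_one d t v) w) = t * (cmod (\<Sum>j<d. cnj (v $ j) * w $ j))\<^sup>2"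
proof -
  let ?s = "\<Sum>j<d. cnj (v $ j) * w $ j"
  have "qform (rank_one d t v) w =
      (\<Sum>i<d. \<Sum>j<d. (complex_of_real t * (cnj (w $ i) * v $ i)) * (cnj (v $ j) * w $ j))"
    unfolding qform_def by (intro sum.cong refl) (auto simp: rank_one_def algebra_simps)
  also have "\<dots> = (\<Sum>i<d. complex_of_real t * (cnj (w $ i) * v $ i)) * ?s"
    by (simp only: sum_product)
  also have "(\<Sum>i<d. complex_of_real t * (cnj (w $ i) * v $ i)) = complex_of_real t * cnj ?s"
    by (simp add: sum_distrib_left mult.commute)
  finally have "qform (rank_one d t v) w = complex_of_real (t * (cmod ?s)\<^sup>2)"
    by (simp only: mult.assoc cnj_mult_self of_real_mult)
  then show ?thesis by simp
qed

lemma qadj_rank_one: "qadj (rank_one d t v) = rank_one d t v"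
  by (intro eq_matI) (auto simp: qadj_def rank_one_def)

lemma psd_rank_one:
  assumes "t \<ge> 0"
  shows "psd d (rank_one d t v)"
  using assms by (simp add: psd_def qadj_rank_one Re_qform_rank_one)

lemma psd_one_minus_rank_one:
  assumes "t \<ge> 0" and "t * (\<Sum>j<d. (cmod (v $ j))\<^sup>2) \<le> 1"
  shows "psd d (1\<^sub>m d - rank_one d t v)"
proof -
  have "Re (qform (1\<^sub>m d - rank_one d t v) w) \<ge> 0" for w
  proof -
    let ?V = "\<Sum>j<d. (cmod (v $ j))\<^sup>2" and ?W = "\<Sum>j<d. (cmod (w $ j))\<^sup>2"
    have "t * (cmod (\<Sum>j<d. cnj (v $ j) * w $ j))\<^sup>2 \<le> t * (?V * ?W)"
      using cmod_sum_cnj_mult_squared_le assms(1) by (rule mult_left_mono)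
    also have "\<dots> \<le> ?W"
      using mult_right_mono[OF assms(2), of ?W] by (simp add: sum_nonneg mult.assoc)
    finally show ?thesis
      by (simp add: qform_minus[of _ d] Re_qform_one Re_qform_rank_one)
  qed
  moreover have "qadj (1\<^sub>m d - rank_one d t v) = 1\<^sub>m d - rank_one d t v"
    by (intro eq_matI) (auto simp: qadj_def rank_one_def one_mat_def)
  ultimately show ?thesis by (simp add: psd_def minus_carrier_mat)
qed

lemma rank_one_effect:
  assumes "t \<ge> 0" and "t * (\<Sum>j<d. (cmod (v $ j))\<^sup>2) \<le> 1"
  shows "loewner_le d (0\<^sub>m d d) (rank_one d t v)" and "loewner_le d (rank_one d t v) (1\<^sub>m d)"
proof -
  have "rank_one d t v - 0\<^sub>m d d = rank_one d t v" by (intro eq_matI) (auto simp: rank_one_def)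
  then show "loewner_le d (0\<^sub>m d d) (rank_one d t v)"
    using psd_rank_one[OF assms(1)] by (simp add: loewner_le_def)
  show "loewner_le d (rank_one d t v) (1\<^sub>m d)"
    using psd_one_minus_rank_one[OF assms] by (simp add: loewner_le_def)
qed

lemma diff_private_loewner_le:
  assumes "quantum_channel n m E" and dp: "diff_private n m rel E \<epsilon> 0"
    and "density n \<rho>" and "density n \<sigma>" and "rel \<rho> \<sigma>"
  shows "loewner_le m (E \<rho>) (complex_of_real (exp \<epsilon>) \<cdot>\<^sub>m E \<sigma>)"
proof -
  let ?c = "complex_of_real (exp \<epsilon>)"
  have psd: "psd m (E \<rho>)" "psd m (E \<sigma>)"
    using assms quantum_channel_density by (auto simp: density_def)
  then have carrier: "E \<rho> \<in> carrier_mat m m" "E \<sigma> \<in> carrier_mat m m"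
    by (auto simp: psd_def)
  have "Re (qform (E \<rho>) v) \<le> exp \<epsilon> * Re (qform (E \<sigma>) v)" for v
  proof -
    define t where "t = 1 / (1 + (\<Sum>j<m. (cmod (v $ j))\<^sup>2))"
    have "(\<Sum>j<m. (cmod (v $ j))\<^sup>2) \<ge> 0" by (simp add: sum_nonneg)
    then have t: "t > 0" "t * (\<Sum>j<m. (cmod (v $ j))\<^sup>2) \<le> 1"
      unfolding t_def by (auto simp: field_simps)
    have "Re (qtrace (rank_one m t v * E \<rho>)) \<le> exp \<epsilon> * Re (qtrace (rank_one m t v * E \<sigma>))"
      using dp rank_one_effect[OF less_imp_le[OF t(1)] t(2)] assms(3-5)
      unfolding diff_private_def by fastforce
    then have "t * Re (qform (E \<rho>) v) \<le> t * (exp \<epsilon> * Re (qform (E \<sigma>) v))"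
      by (simp add: qtrace_rank_one_mult carrier algebra_simps)
    then show ?thesis using t(1) by simp
  qed
  moreover have "?c \<cdot>\<^sub>m E \<sigma> - E \<rho> \<in> carrier_mat m m"
    using carrier by (simp add: minus_carrier_mat)
  ultimately have "psd m (?c \<cdot>\<^sub>m E \<sigma> - E \<rho>)"
    using psd carrier
    by (simp add: psd_def qform_minus[of _ m] qadj_minus[of _ m] qform_smult qadj_smult_of_real)
  then show ?thesis using carrier by (simp add: loewner_le_def)
qed

lemma Dmax_le_log:
  assumes "density d \<rho>" and "density d \<sigma>" and "c > 0"
    and "loewner_le d \<rho> (complex_of_real c \<cdot>\<^sub>m \<sigma>)"
  shows "Dmax d \<rho> \<sigma> \<le> ereal (log 2 c)"
proof -
  define S where "S = {\<mu>::real. loewner_le d \<rho> (complex_of_real \<mu> \<cdot>\<^sub>m \<sigma>)}"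
  have carrier: "\<rho> \<in> carrier_mat d d" "\<sigma> \<in> carrier_mat d d"
    using assms by (auto simp: density_def psd_def)
  have "c \<in> S" using assms(4) by (simp add: S_def)
  have ge_1: "\<mu> \<ge> 1" if "\<mu> \<in> S" for \<mu>
  proof -
    have "0 \<le> Re (qtrace (complex_of_real \<mu> \<cdot>\<^sub>m \<sigma> - \<rho>))"
      using that by (intro psd_qtrace_nonneg[of d]) (simp add: S_def loewner_le_def)
    also have "qtrace (complex_of_real \<mu> \<cdot>\<^sub>m \<sigma> - \<rho>) = complex_of_real \<mu> - 1"
      using assms carrier by (simp add: qtrace_minus[of _ d] qtrace_smult[of _ d] density_def)
    finally show ?thesis by simp
  qed
  have "Inf S \<le> c" using \<open>c \<in> S\<close> ge_1 by (intro cInf_lower bdd_belowI) auto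
  moreover have "1 \<le> Inf S" using \<open>c \<in> S\<close> ge_1 by (intro cInf_greatest) auto
  ultimately have "log 2 (Inf S) \<le> log 2 c" by simp
  then show ?thesis using assms(4) unfolding Dmax_def S_def by auto
qed

lemma mixture_point_mass:
  assumes "finite X" and "x\<^sub>0 \<in> X" and "\<tau> x\<^sub>0 \<in> carrier_mat d d"
  shows "mixture d X (\<lambda>x. of_bool (x = x\<^sub>0)) \<tau> = \<tau> x\<^sub>0"
proof -
  have "complex_of_real (of_bool P) = of_bool P" for P by simp
  moreover have "X \<inter> {x. x = x\<^sub>0} = {x\<^sub>0}" using assms(2) by blast
  ultimately show ?thesis using assms by (intro eq_matI) (auto simp: mixture_def)
qed

lemma B_quant_le_R_quant:
  assumes "finite X" and "X \<noteq> {}" and "\<forall>x\<in>X. \<tau> x \<in> carrier_mat d d"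
  shows "B_quant d X \<tau> \<le> R_quant d X \<tau>"
proof -
  obtain x\<^sub>0 where "x\<^sub>0 \<in> X" using assms(2) by blast
  let ?\<pi> = "\<lambda>x. of_bool (x = x\<^sub>0) :: real"
  have "?\<pi> \<in> pmfs_on X" using assms(1) \<open>x\<^sub>0 \<in> X\<close> by (simp add: pmfs_on_def)
  then have "B_quant d X \<tau> \<le> (SUP x \<in> X. Dmax d (\<tau> x) (mixture d X ?\<pi> \<tau>))"
    unfolding B_quant_def by (rule INF_lower)
  also have "\<dots> = (SUP x \<in> X. Dmax d (\<tau> x) (\<tau> x\<^sub>0))"
    using assms \<open>x\<^sub>0 \<in> X\<close> by (simp add: mixture_point_mass)
  also have "\<dots> \<le> R_quant d X \<tau>"
    unfolding R_quant_def using \<open>x\<^sub>0 \<in> X\<close> by (intro SUP_mono) (auto intro: SUP_upper)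
  finally show ?thesis .
qed

theorem proposition6:
  fixes n m :: nat and X :: "'x set" and \<rho> :: "'x \<Rightarrow> complex mat"
    and rel :: "complex mat \<Rightarrow> complex mat \<Rightarrow> bool"
    and E :: "complex mat \<Rightarrow> complex mat" and \<epsilon> :: real
  assumes "finite X" and "X \<noteq> {}"
    and "\<forall>x\<in>X. density n (\<rho> x)"
    and "neighbouring n rel"
    and "\<forall>x\<in>X. \<forall>x'\<in>X. rel (\<rho> x) (\<rho> x')"
    and "quantum_channel n m E"
    and "\<epsilon> \<ge> 0"
    and "diff_private n m rel E \<epsilon> 0"
  shows "B_quant m X (\<lambda>x. E (\<rho> x)) \<le> R_quant m X (\<lambda>x. E (\<rho> x))
    \<and> R_quant m X (\<lambda>x. E (\<rho> x)) \<le> ereal (\<epsilon> / ln 2)"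
proof
  have output_density: "density m (E (\<rho> x))" if "x \<in> X" for x
    using quantum_channel_density[OF assms(6)] assms(3) that by blast
  then show "B_quant m X (\<lambda>x. E (\<rho> x)) \<le> R_quant m X (\<lambda>x. E (\<rho> x))"
    using assms(1,2) by (intro B_quant_le_R_quant) (auto simp: density_def psd_def)
  have "Dmax m (E (\<rho> x)) (E (\<rho> x')) \<le> ereal (\<epsilon> / ln 2)" if "x \<in> X" "x' \<in> X" for x x'
  proof -
    have "loewner_le m (E (\<rho> x)) (complex_of_real (exp \<epsilon>) \<cdot>\<^sub>m E (\<rho> x'))"
      using diff_private_loewner_le[OF assms(6,8)] assms(3,5) that by blast
    then have "Dmax m (E (\<rho> x)) (E (\<rho> x')) \<le> ereal (log 2 (exp \<epsilon>))"
      using output_density that by (intro Dmax_le_log) auto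
    then show ?thesis by (simp add: log_def)
  qed
  then show "R_quant m X (\<lambda>x. E (\<rho> x)) \<le> ereal (\<epsilon> / ln 2)"
    unfolding R_quant_def by (intro SUP_least) auto
qed

end
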